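(* There is an absolute constant $c>0$ such that every connected finite simple undirected graph on $d\ge2$ vertices in which every vertex has degree $1$ or degree at least $3$ has a spanning tree with at least $c\,d$ leaves.
   Context: A leaf of a tree is a vertex of degree 1. *)

theory Defs
  imports Complex_Main
begin

definition simple_graph :: "'a set \<Rightarrow> 'a set set \<Rightarrow> bool" where
  "simple_graph V E \<longleftrightarrow> finite V \<and> (\<forall>e\<in>E. e \<subseteq> V \<and> card e = 2)"

definition adj :: "'a set set \<Rightarrow> 'a \<Rightarrow> 'a \<Rightarrow> bool" where
  "adj E u v \<longleftrightarrow> {u, v} \<in> E"

definition degree :: "'a set set \<Rightarrow> 'a \<Rightarrow> nat" where
  "degree E v = card {e \<in> E. v \<in> e}"

definition is_walk :: "'a set \<Rightarrow> 'a set set \<Rightarrow> 'a list \<Rightarrow> bool" where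
  "is_walk V E xs \<longleftrightarrow> xs \<noteq> [] \<and> set xs \<subseteq> V \<and>
     (\<forall>i. Suc i < length xs \<longrightarrow> adj E (xs ! i) (xs ! Suc i))"

definition connected_graph :: "'a set \<Rightarrow> 'a set set \<Rightarrow> bool" where
  "connected_graph V E \<longleftrightarrow> V \<noteq> {} \<and>
     (\<forall>u\<in>V. \<forall>v\<in>V. \<exists>xs. is_walk V E xs \<and> hd xs = u \<and> last xs = v)"

definition is_cycle :: "'a set \<Rightarrow> 'a set set \<Rightarrow> 'a list \<Rightarrow> bool" where
  "is_cycle V E xs \<longleftrightarrow> length xs \<ge> 3 \<and> distinct xs \<and> is_walk V E xs \<and>
     adj E (last xs) (hd xs)"

definition acyclic_graph :: "'a set \<Rightarrow> 'a set set \<Rightarrow> bool" where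
  "acyclic_graph V E \<longleftrightarrow> \<not> (\<exists>xs. is_cycle V E xs)"

definition is_tree :: "'a set \<Rightarrow> 'a set set \<Rightarrow> bool" where
  "is_tree V E \<longleftrightarrow> simple_graph V E \<and> connected_graph V E \<and> acyclic_graph V E"

definition spanning_tree :: "'a set \<Rightarrow> 'a set set \<Rightarrow> 'a set set \<Rightarrow> bool" where
  "spanning_tree V E T \<longleftrightarrow> T \<subseteq> E \<and> is_tree V T"

definition leaves :: "'a set \<Rightarrow> 'a set set \<Rightarrow> 'a set" where
  "leaves V E = {v \<in> V. degree E v = 1}"

end

theory Submission
  imports Defs
begin

text \<open>A spanning tree is grown from a root: the current subtree on S, with leaf set L (the
  root not counted) and set D of dead leaves, those without neighbours outside S, always satisfies
  |S| \<le> 3|L| + |D| + 1. One of three expansions preserves this bound as long as S \<noteq> V: attach all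
  outside neighbours of a vertex x of S that is not a leaf or has at least two of them; attach an
  outside neighbour y of S together with its at least two outside neighbours; or attach a single
  outside vertex y when this kills a leaf. If the first two fail at an edge x y leaving S, then x is a
  leaf whose only outside neighbour is y, and either y has another neighbour in S, which is then a
  leaf killed by attaching y, or y has degree at most 2, hence degree 1, and becomes a dead leaf
  itself. For S = V every leaf is dead, so |V| \<le> 4|L| + 1, which gives |L| \<ge> |V|/8 when |V| \<ge> 2.\<close>

definition nbrs :: "'a set set \<Rightarrow> 'a \<Rightarrow> 'a set" where
  "nbrs E v = {u. adj E v u}"

lemma adj_sym: "adj E u v \<longleftrightarrow> adj E v u"
  by (simp add: adj_def insert_commute)

lemma adj_in_vertices:
  assumes "simple_graph V E" "adj E u v"
  shows "u \<in> V" "v \<in> V" "u \<noteq> v"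
  using assms by (auto simp: simple_graph_def adj_def)

lemma nbrs_subset: "simple_graph V E \<Longrightarrow> nbrs E v \<subseteq> V"
  using adj_in_vertices(2) by (fastforce simp: nbrs_def)

lemma finite_nbrs: "simple_graph V E \<Longrightarrow> finite (nbrs E v)"
  using nbrs_subset by (metis finite_subset simple_graph_def)

lemma degree_eq_card_nbrs:
  assumes "simple_graph V E"
  shows "degree E v = card (nbrs E v)"
proof -
  have "{e \<in> E. v \<in> e} = (\<lambda>u. {v, u}) ` nbrs E v"
  proof (intro equalityI subsetI)
    fix e assume e: "e \<in> {e \<in> E. v \<in> e}"
    then have "card e = 2" using assms by (auto simp: simple_graph_def)
    then obtain a b where "e = {a, b}" "a \<noteq> b" by (meson card_2_iff)
    with e have "e = {v, if a = v then b else a}" by fastforce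
    with e show "e \<in> (\<lambda>u. {v, u}) ` nbrs E v" by (auto simp: nbrs_def adj_def)
  qed (auto simp: nbrs_def adj_def)
  moreover have "inj_on (\<lambda>u. {v, u}) (nbrs E v)"
    by (auto simp: inj_on_def doubleton_eq_iff)
  ultimately show ?thesis by (simp add: degree_def card_image)
qed

lemma is_walk_Cons:
  "is_walk V E (a # xs) \<longleftrightarrow> a \<in> V \<and> (xs = [] \<or> adj E a (hd xs) \<and> is_walk V E xs)"
  by (cases xs) (auto simp: is_walk_def nth_Cons split: nat.splits)

lemma is_walk_append:
  assumes "is_walk V E xs" "is_walk V E ys" "last xs = hd ys"
  shows "is_walk V E (xs @ tl ys)"
  using assms
proof (induction xs)
  case (Cons a xs)
  show ?case
  proof (cases "xs = []")
    case True
    with Cons.prems show ?thesis by (cases ys) (auto simp: is_walk_def)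
  next
    case False
    with Cons show ?thesis by (auto simp: is_walk_Cons)
  qed
qed (simp add: is_walk_def)

lemma last_append_tl:
  "xs \<noteq> [] \<Longrightarrow> ys \<noteq> [] \<Longrightarrow> last xs = hd ys \<Longrightarrow> last (xs @ tl ys) = last ys"
  by (cases ys) auto

lemma is_walk_rev: "is_walk V E xs \<Longrightarrow> is_walk V E (rev xs)"
  unfolding is_walk_def
proof (intro conjI allI impI)
  fix i
  assume "xs \<noteq> [] \<and> set xs \<subseteq> V \<and>
    (\<forall>i. Suc i < length xs \<longrightarrow> adj E (xs ! i) (xs ! Suc i))"
    and i: "Suc i < length (rev xs)"
  then have "adj E (xs ! (length xs - Suc (Suc i))) (xs ! Suc (length xs - Suc (Suc i)))"
    by simp
  moreover have "Suc (length xs - Suc (Suc i)) = length xs - Suc i" using i by simp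
  ultimately show "adj E (rev xs ! i) (rev xs ! Suc i)"
    using i by (simp add: rev_nth adj_sym)
qed auto

lemma is_walk_crossing_edge:
  "is_walk V E xs \<Longrightarrow> hd xs \<in> S \<Longrightarrow> last xs \<notin> S \<Longrightarrow>
    \<exists>a b. a \<in> S \<and> b \<notin> S \<and> adj E a b"
proof (induction xs)
  case (Cons a xs)
  then show ?case by (cases "xs = []") (auto simp: is_walk_Cons)
qed (simp add: is_walk_def)

lemma connected_graph_cut_edge:
  assumes "simple_graph V E" "connected_graph V E" "S \<subseteq> V" "S \<noteq> {}" "S \<noteq> V"
  obtains x y where "x \<in> S" "y \<in> V - S" "adj E x y"
proof -
  obtain u v where "u \<in> S" "v \<in> V - S" using assms by blast
  then obtain xs where "is_walk V E xs" "hd xs = u" "last xs = v"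
    using assms unfolding connected_graph_def by blast
  then obtain a b where "a \<in> S" "b \<notin> S" "adj E a b"
    using is_walk_crossing_edge \<open>u \<in> S\<close> \<open>v \<in> V - S\<close> by blast
  then show thesis using that adj_in_vertices(2)[OF assms(1)] by blast
qed

lemma connected_graphI_walks_to:
  assumes "r \<in> V" "\<And>v. v \<in> V \<Longrightarrow> \<exists>xs. is_walk V E xs \<and> hd xs = v \<and> last xs = r"
  shows "connected_graph V E"
  unfolding connected_graph_def
proof (intro conjI ballI)
  fix u v assume "u \<in> V" "v \<in> V"
  then obtain xs ys where xs: "is_walk V E xs" "hd xs = u" "last xs = r"
    and ys: "is_walk V E ys" "hd ys = v" "last ys = r"
    using assms(2) by blast
  have "xs \<noteq> []" "ys \<noteq> []" using xs ys by (auto simp: is_walk_def)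
  then have "is_walk V E (xs @ tl (rev ys)) \<and> hd (xs @ tl (rev ys)) = u \<and> last (xs @ tl (rev ys)) = v"
    using is_walk_append[OF xs(1) is_walk_rev[OF ys(1)]] last_append_tl[of xs "rev ys"] xs ys
    by (simp add: hd_rev last_rev)
  then show "\<exists>zs. is_walk V E zs \<and> hd zs = u \<and> last zs = v" by blast
qed (use assms in auto)

lemma is_cycle_adj_succ:
  assumes "is_cycle V E xs" "i < length xs"
  shows "adj E (xs ! i) (xs ! (Suc i mod length xs))"
proof (cases "Suc i < length xs")
  case True
  then show ?thesis using assms(1) by (simp add: is_cycle_def is_walk_def)
next
  case False
  then have "Suc i = length xs" using assms(2) by simp
  then have "i = length xs - 1" "Suc i mod length xs = 0" by simp_all
  moreover have "xs \<noteq> []" using assms(2) by auto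
  ultimately show ?thesis
    using assms(1) by (simp add: is_cycle_def last_conv_nth hd_conv_nth)
qed

lemma is_cycle_two_nbrs:
  assumes cyc: "is_cycle V E xs" and "v \<in> set xs"
  obtains a b where "a \<in> set xs" "b \<in> set xs" "a \<noteq> b" "adj E v a" "adj E v b"
proof -
  define k where "k = length xs"
  obtain i where i: "i < k" "v = xs ! i" using assms(2) by (auto simp: in_set_conv_nth k_def)
  have k3: "k \<ge> 3" using cyc by (simp add: is_cycle_def k_def)
  define j where "j = (if i = 0 then k - 1 else i - 1)"
  have j: "j < k" "Suc j mod k = i" using i k3 by (auto simp: j_def)
  have succ: "Suc i mod k < k" using k3 by simp
  have "Suc i mod k \<noteq> j" using i k3 by (auto simp: j_def mod_Suc)
  then have "xs ! (Suc i mod k) \<noteq> xs ! j"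
    using cyc j(1) succ by (simp add: is_cycle_def nth_eq_iff_index_eq k_def)
  moreover have "adj E v (xs ! (Suc i mod k))" "adj E v (xs ! j)"
    using is_cycle_adj_succ[OF cyc] i j by (auto simp: k_def adj_sym)
  ultimately show thesis
    using that[OF nth_mem nth_mem] j(1) succ by (simp add: k_def)
qed

text \<open>The rank function witnesses that following parent pointers from any vertex of S
  reaches the root r.\<close>

definition parent_tree :: "'a set \<Rightarrow> 'a set set \<Rightarrow> 'a \<Rightarrow> 'a set \<Rightarrow> ('a \<Rightarrow> 'a) \<Rightarrow> bool" where
  "parent_tree V E r S p \<longleftrightarrow> r \<in> S \<and> S \<subseteq> V \<and> (\<forall>v\<in>S - {r}. p v \<in> S \<and> {v, p v} \<in> E) \<and>
     (\<exists>rk :: 'a \<Rightarrow> nat. \<forall>v\<in>S - {r}. rk (p v) < rk v)"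

definition parent_edges :: "'a \<Rightarrow> 'a set \<Rightarrow> ('a \<Rightarrow> 'a) \<Rightarrow> 'a set set" where
  "parent_edges r S p = (\<lambda>v. {v, p v}) ` (S - {r})"

definition tree_leaves :: "'a \<Rightarrow> 'a set \<Rightarrow> ('a \<Rightarrow> 'a) \<Rightarrow> 'a set" where
  "tree_leaves r S p = S - {r} - p ` (S - {r})"

lemma parent_tree_walk_to_root:
  assumes "parent_tree V E r S p" "v \<in> S"
  shows "\<exists>xs. is_walk S (parent_edges r S p) xs \<and> hd xs = v \<and> last xs = r"
proof -
  obtain rk :: "'a \<Rightarrow> nat" where rk: "\<forall>v\<in>S - {r}. rk (p v) < rk v"
    using assms(1) by (auto simp: parent_tree_def)
  show ?thesis
    using assms(2)
  proof (induction v rule: measure_induct_rule[of rk])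
    case (less v)
    show ?case
    proof (cases "v = r")
      case True
      then show ?thesis using less.prems by (intro exI[of _ "[v]"]) (simp add: is_walk_def)
    next
      case False
      then have "p v \<in> S" "rk (p v) < rk v" "adj (parent_edges r S p) v (p v)"
        using assms(1) rk less.prems by (auto simp: parent_tree_def parent_edges_def adj_def)
      moreover obtain xs where "is_walk S (parent_edges r S p) xs" "hd xs = p v" "last xs = r"
        using less.IH calculation(1,2) by blast
      moreover have "xs \<noteq> []" using calculation(4) by (simp add: is_walk_def)
      ultimately show ?thesis
        using less.prems by (intro exI[of _ "v # xs"]) (simp add: is_walk_Cons)
    qed
  qed
qed

lemma parent_tree_acyclic:
  assumes "parent_tree V E r S p"
  shows "acyclic_graph S (parent_edges r S p)"
  unfolding acyclic_graph_def
proof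
  assume "\<exists>xs. is_cycle S (parent_edges r S p) xs"
  then obtain xs where cyc: "is_cycle S (parent_edges r S p) xs" by blast
  obtain rk :: "'a \<Rightarrow> nat" where rk: "\<forall>v\<in>S - {r}. rk (p v) < rk v"
    using assms by (auto simp: parent_tree_def)
  have "xs \<noteq> []" using cyc by (auto simp: is_cycle_def)
  then have "Max (rk ` set xs) \<in> rk ` set xs" by simp
  then obtain m where "m \<in> set xs" "rk m = Max (rk ` set xs)" by (metis imageE)
  then have m: "m \<in> set xs" "\<forall>a\<in>set xs. rk a \<le> rk m" by simp_all
  have to_parent: "a = p m" if a: "a \<in> set xs" and ma: "adj (parent_edges r S p) m a" for a
  proof -
    obtain w where w: "w \<in> S - {r}" "{m, a} = {w, p w}"
      using ma by (auto simp: parent_edges_def adj_def)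
    have "rk a \<le> rk m" using m a by blast
    moreover have "rk (p w) < rk w" using rk w(1) by blast
    ultimately have "m = w \<and> a = p w" using w(2) by (auto simp: doubleton_eq_iff)
    then show ?thesis by simp
  qed
  obtain a b where "a \<in> set xs" "b \<in> set xs" "a \<noteq> b"
    "adj (parent_edges r S p) m a" "adj (parent_edges r S p) m b"
    using is_cycle_two_nbrs[OF cyc m(1)] .
  then show False using to_parent by blast
qed

lemma parent_tree_is_tree:
  assumes "simple_graph V E" "parent_tree V E r S p"
  shows "is_tree S (parent_edges r S p)"
proof -
  have "parent_edges r S p \<subseteq> E" "\<forall>e\<in>parent_edges r S p. e \<subseteq> S" "finite S"
    using assms by (auto simp: parent_tree_def parent_edges_def simple_graph_def intro: finite_subset)
  then have "simple_graph S (parent_edges r S p)"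
    using assms(1) by (auto simp: simple_graph_def)
  moreover have "connected_graph S (parent_edges r S p)"
    using assms(2) connected_graphI_walks_to[of r, OF _ parent_tree_walk_to_root[OF assms(2)]]
    by (simp add: parent_tree_def)
  ultimately show ?thesis
    using parent_tree_acyclic[OF assms(2)] by (simp add: is_tree_def)
qed

lemma tree_leaves_subset_leaves: "tree_leaves r S p \<subseteq> leaves S (parent_edges r S p)"
proof
  fix v assume v: "v \<in> tree_leaves r S p"
  then have "{e \<in> parent_edges r S p. v \<in> e} = {{v, p v}}"
    by (auto simp: tree_leaves_def parent_edges_def)
  with v show "v \<in> leaves S (parent_edges r S p)"
    by (simp add: leaves_def degree_def tree_leaves_def)
qed

definition dead_leaves :: "'a set set \<Rightarrow> 'a \<Rightarrow> 'a set \<Rightarrow> ('a \<Rightarrow> 'a) \<Rightarrow> 'a set" where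
  "dead_leaves E r S p = {v \<in> tree_leaves r S p. nbrs E v \<subseteq> S}"

lemma finite_dead_leaves: "finite S \<Longrightarrow> finite (dead_leaves E r S p)"
  by (rule finite_subset[of _ S]) (auto simp: dead_leaves_def tree_leaves_def)

definition attach :: "'a set \<Rightarrow> 'a \<Rightarrow> ('a \<Rightarrow> 'a) \<Rightarrow> 'a \<Rightarrow> 'a" where
  "attach A x p v = (if v \<in> A then x else p v)"

context
  fixes V :: "'a set" and E r S p x A
  assumes G: "simple_graph V E" and T: "parent_tree V E r S p" and x: "x \<in> S"
    and A: "A \<noteq> {}" "A \<subseteq> nbrs E x - S"
begin

lemma attach_finite: "finite S" "finite A"
  using G T A(2) nbrs_subset[OF G] by (auto simp: simple_graph_def parent_tree_def intro: finite_subset)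

lemma parent_tree_attach: "parent_tree V E r (S \<union> A) (attach A x p)"
proof -
  obtain rk :: "'a \<Rightarrow> nat" where rk: "\<forall>v\<in>S - {r}. rk (p v) < rk v"
    using T by (auto simp: parent_tree_def)
  define rk' where "rk' v = (if v \<in> A then Suc (Max (rk ` S)) else rk v)" for v
  have "rk x < Suc (Max (rk ` S))" using x attach_finite(1) by (simp add: le_imp_less_Suc)
  then have "\<forall>v\<in>S \<union> A - {r}. rk' (attach A x p v) < rk' v"
    using rk T A(2) x by (auto simp: rk'_def attach_def parent_tree_def)
  moreover have "\<forall>v\<in>A. {v, x} \<in> E"
    using A(2) by (auto simp: nbrs_def adj_def insert_commute)
  then have "\<forall>v\<in>S \<union> A - {r}. attach A x p v \<in> S \<union> A \<and> {v, attach A x p v} \<in> E"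
    using T x by (auto simp: parent_tree_def attach_def)
  moreover have "A \<subseteq> V" using A(2) nbrs_subset[OF G] by blast
  ultimately show ?thesis
    using T unfolding parent_tree_def by blast
qed

lemma tree_leaves_attach: "tree_leaves r (S \<union> A) (attach A x p) = tree_leaves r S p - {x} \<union> A"
proof -
  have "r \<in> S" "p ` (S - {r}) \<subseteq> S" using T by (auto simp: parent_tree_def)
  moreover have "attach A x p ` (S \<union> A - {r}) = insert x (p ` (S - {r}))"
    using A calculation(1) by (auto simp: attach_def)
  ultimately show ?thesis using x A(2) by (auto simp: tree_leaves_def)
qed

lemma card_tree_leaves_attach:
  "card (tree_leaves r S p) + card A =
     card (tree_leaves r (S \<union> A) (attach A x p)) + (if x \<in> tree_leaves r S p then 1 else 0)"
proof -
  have "finite (tree_leaves r S p)" "tree_leaves r S p \<inter> A = {}"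
    using attach_finite A(2) by (auto simp: tree_leaves_def)
  moreover have "card (tree_leaves r S p - {x} \<union> A) = card (tree_leaves r S p - {x}) + card A"
    using calculation attach_finite(2) by (intro card_Un_disjoint) auto
  ultimately show ?thesis
    using card_Suc_Diff1[of "tree_leaves r S p" x] by (auto simp: tree_leaves_attach)
qed

lemma dead_leaves_attach: "dead_leaves E r S p \<subseteq> dead_leaves E r (S \<union> A) (attach A x p)"
proof -
  have "x \<notin> dead_leaves E r S p" using A by (auto simp: dead_leaves_def)
  then show ?thesis by (auto simp: dead_leaves_def tree_leaves_attach)
qed

lemma card_attach: "card (S \<union> A) = card S + card A"
  using attach_finite A(2) by (intro card_Un_disjoint) auto

end

definition leaf_count_bound :: "'a set set \<Rightarrow> 'a \<Rightarrow> 'a set \<Rightarrow> ('a \<Rightarrow> 'a) \<Rightarrow> bool" where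
  "leaf_count_bound E r S p \<longleftrightarrow>
     card S \<le> 3 * card (tree_leaves r S p) + card (dead_leaves E r S p) + 1"

context
  fixes V :: "'a set" and E r S p
  assumes G: "simple_graph V E" and T: "parent_tree V E r S p" and bound: "leaf_count_bound E r S p"
begin

lemma expand_at_vertex:
  assumes x: "x \<in> S" and new: "nbrs E x - S \<noteq> {}"
    and "x \<notin> tree_leaves r S p \<or> card (nbrs E x - S) \<ge> 2"
  shows "\<exists>S' p'. S \<subset> S' \<and> parent_tree V E r S' p' \<and> leaf_count_bound E r S' p'"
proof -
  define A where "A = nbrs E x - S"
  have A: "A \<noteq> {}" "A \<subseteq> nbrs E x - S" using new by (auto simp: A_def)
  have "card (dead_leaves E r S p) \<le> card (dead_leaves E r (S \<union> A) (attach A x p))"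
    using dead_leaves_attach[OF G T x A] attach_finite[OF G T x A]
    by (intro card_mono finite_dead_leaves) auto
  then have "leaf_count_bound E r (S \<union> A) (attach A x p)"
    using bound assms(3) card_tree_leaves_attach[OF G T x A] card_attach[OF G T x A]
    by (cases "x \<in> tree_leaves r S p") (auto simp: leaf_count_bound_def A_def)
  moreover have "S \<subset> S \<union> A" using A by blast
  ultimately show ?thesis using parent_tree_attach[OF G T x A] by blast
qed

lemma expand_through_new_vertex:
  assumes x: "x \<in> S" and y: "y \<notin> S" "adj E x y" and new: "card (nbrs E y - S) \<ge> 2"
  shows "\<exists>S' p'. S \<subset> S' \<and> parent_tree V E r S' p' \<and> leaf_count_bound E r S' p'"
proof -
  define p1 where "p1 = attach {y} x p"
  define B where "B = nbrs E y - S"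
  have Y: "{y} \<noteq> {}" "{y} \<subseteq> nbrs E x - S" using y by (auto simp: nbrs_def)
  note T1 = parent_tree_attach[OF G T x Y, folded p1_def]
  have "y \<notin> nbrs E y" using adj_in_vertices(3)[OF G] by (auto simp: nbrs_def)
  moreover have "B \<noteq> {}" using new by (metis B_def card.empty not_numeral_le_zero)
  ultimately have B: "B \<noteq> {}" "B \<subseteq> nbrs E y - (S \<union> {y})" by (auto simp: B_def)
  have y1: "y \<in> S \<union> {y}" "y \<in> tree_leaves r (S \<union> {y}) p1"
    using tree_leaves_attach[OF G T x Y] by (auto simp: p1_def)
  have "dead_leaves E r S p \<subseteq> dead_leaves E r (S \<union> {y} \<union> B) (attach B y p1)"
    using dead_leaves_attach[OF G T x Y] dead_leaves_attach[OF G T1 y1(1) B] by (auto simp: p1_def)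
  then have "card (dead_leaves E r S p) \<le> card (dead_leaves E r (S \<union> {y} \<union> B) (attach B y p1))"
    using attach_finite[OF G T1 y1(1) B] by (intro card_mono finite_dead_leaves) auto
  then have "leaf_count_bound E r (S \<union> {y} \<union> B) (attach B y p1)"
    using bound new y1(2) card_tree_leaves_attach[OF G T x Y] card_attach[OF G T x Y]
      card_tree_leaves_attach[OF G T1 y1(1) B] card_attach[OF G T1 y1(1) B]
    by (cases "x \<in> tree_leaves r S p") (auto simp: leaf_count_bound_def B_def p1_def)
  moreover have "S \<subset> S \<union> {y} \<union> B" using y by blast
  ultimately show ?thesis using parent_tree_attach[OF G T1 y1(1) B] by blast
qed

lemma expand_killing_leaf:
  assumes x: "x \<in> S" and y: "y \<notin> S" "adj E x y"
    and z: "z \<in> tree_leaves r S p - {x} \<union> {y}" "nbrs E z \<subseteq> insert y S"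
      "z \<notin> dead_leaves E r S p"
  shows "\<exists>S' p'. S \<subset> S' \<and> parent_tree V E r S' p' \<and> leaf_count_bound E r S' p'"
proof -
  have Y: "{y} \<noteq> {}" "{y} \<subseteq> nbrs E x - S" using y by (auto simp: nbrs_def)
  have "insert z (dead_leaves E r S p) \<subseteq> dead_leaves E r (S \<union> {y}) (attach {y} x p)"
    using dead_leaves_attach[OF G T x Y] tree_leaves_attach[OF G T x Y] z(1,2)
    by (auto simp: dead_leaves_def)
  then have "card (insert z (dead_leaves E r S p)) \<le> card (dead_leaves E r (S \<union> {y}) (attach {y} x p))"
    using attach_finite[OF G T x Y] by (intro card_mono finite_dead_leaves) auto
  moreover have "card (insert z (dead_leaves E r S p)) = card (dead_leaves E r S p) + 1"
    using z(3) attach_finite(1)[OF G T x Y] by (simp add: finite_dead_leaves)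
  ultimately have "leaf_count_bound E r (S \<union> {y}) (attach {y} x p)"
    using bound card_tree_leaves_attach[OF G T x Y] card_attach[OF G T x Y]
    by (cases "x \<in> tree_leaves r S p") (auto simp: leaf_count_bound_def)
  moreover have "S \<subset> S \<union> {y}" using y by blast
  ultimately show ?thesis using parent_tree_attach[OF G T x Y] by blast
qed

lemma expansion_step:
  assumes C: "connected_graph V E" and deg: "\<forall>v\<in>V. degree E v = 1 \<or> degree E v \<ge> 3"
    and "S \<noteq> V"
  shows "\<exists>S' p'. S \<subset> S' \<and> parent_tree V E r S' p' \<and> leaf_count_bound E r S' p'"
proof (cases "\<exists>x\<in>S. nbrs E x - S \<noteq> {} \<and> (x \<notin> tree_leaves r S p \<or> card (nbrs E x - S) \<ge> 2)")
  case True
  then show ?thesis using expand_at_vertex by blast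
next
  case no_vertex: False
  show ?thesis
  proof (cases "\<exists>x y. x \<in> S \<and> y \<notin> S \<and> adj E x y \<and> card (nbrs E y - S) \<ge> 2")
    case True
    then show ?thesis using expand_through_new_vertex by blast
  next
    case no_new_vertex: False
    obtain x y where x: "x \<in> S" and y: "y \<in> V - S" "adj E x y"
      using connected_graph_cut_edge[OF G C _ _ \<open>S \<noteq> V\<close>] T by (auto simp: parent_tree_def)
    have sole_exit: "x' \<in> tree_leaves r S p \<and> nbrs E x' - S = {y}" if "x' \<in> S" "adj E x' y" for x'
    proof -
      have "y \<in> nbrs E x' - S" using that y by (simp add: nbrs_def)
      moreover have "x' \<in> tree_leaves r S p \<and> card (nbrs E x' - S) \<le> 1"
        using no_vertex that calculation by force
      ultimately show ?thesis using finite_nbrs[OF G] card_le_Suc0_iff_eq[of "nbrs E x' - S"] by auto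
    qed
    show ?thesis
    proof (cases "\<exists>x'\<in>S. x' \<noteq> x \<and> adj E x' y")
      case True
      then obtain x' where "x' \<in> S" "x' \<noteq> x" "adj E x' y" by blast
      with sole_exit y show ?thesis
        by (intro expand_killing_leaf[OF x _ y(2), of x']) (auto simp: dead_leaves_def)
    next
      case False
      then have "nbrs E y \<subseteq> insert x (nbrs E y - S)" by (auto simp: nbrs_def adj_sym)
      then have "card (nbrs E y) \<le> card (insert x (nbrs E y - S))"
        using finite_nbrs[OF G] by (intro card_mono) auto
      also have "\<dots> \<le> Suc (card (nbrs E y - S))"
        using finite_nbrs[OF G] by (simp add: card_insert_if)
      also have "\<dots> \<le> 2" using no_new_vertex x y by force
      finally have "card (nbrs E y) \<le> 2" .
      then have "card (nbrs E y) = 1" using deg y(1) degree_eq_card_nbrs[OF G] by fastforce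
      moreover have "x \<in> nbrs E y" using y(2) by (simp add: nbrs_def adj_sym)
      ultimately have "nbrs E y = {x}" by (metis card_1_singletonE singletonD)
      with x y show ?thesis
        by (intro expand_killing_leaf[OF x _ y(2), of y]) (auto simp: dead_leaves_def tree_leaves_def)
    qed
  qed
qed

end

lemma exists_spanning_parent_tree:
  assumes G: "simple_graph V E" and C: "connected_graph V E"
    and deg: "\<forall>v\<in>V. degree E v = 1 \<or> degree E v \<ge> 3" and r: "r \<in> V"
  shows "\<exists>p. parent_tree V E r V p \<and> leaf_count_bound E r V p"
proof -
  have "\<exists>p. parent_tree V E r V p \<and> leaf_count_bound E r V p"
    if "parent_tree V E r S p" "leaf_count_bound E r S p" for S p
    using that
  proof (induction "card (V - S)" arbitrary: S p rule: less_induct)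
    case less
    show ?case
    proof (cases "S = V")
      case True
      with less.prems show ?thesis by blast
    next
      case False
      then obtain S' p' where S': "S \<subset> S'" "parent_tree V E r S' p'" "leaf_count_bound E r S' p'"
        using expansion_step[OF G less.prems C deg] by blast
      have "finite V" "S' \<subseteq> V" using G S'(2) by (auto simp: simple_graph_def parent_tree_def)
      then have "card (V - S') < card (V - S)"
        using S'(1) by (intro psubset_card_mono) auto
      with S' show ?thesis using less.hyps by blast
    qed
  qed
  moreover have "parent_tree V E r {r} id" "leaf_count_bound E r {r} id"
    using r by (auto simp: parent_tree_def leaf_count_bound_def)
  ultimately show ?thesis by blast
qed

lemma spanning_tree_many_leaves:
  assumes G: "simple_graph V E" and C: "connected_graph V E"
    and deg: "\<forall>v\<in>V. degree E v = 1 \<or> degree E v \<ge> 3"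
  shows "\<exists>T. spanning_tree V E T \<and> card V \<le> 4 * card (leaves V T) + 1"
proof -
  obtain r where r: "r \<in> V" using C by (auto simp: connected_graph_def)
  then obtain p where T: "parent_tree V E r V p" and bound: "leaf_count_bound E r V p"
    using exists_spanning_parent_tree[OF G C deg] by blast
  have "dead_leaves E r V p = tree_leaves r V p"
    using nbrs_subset[OF G] by (auto simp: dead_leaves_def)
  then have "card V \<le> 4 * card (tree_leaves r V p) + 1"
    using bound by (simp add: leaf_count_bound_def)
  also have "card (tree_leaves r V p) \<le> card (leaves V (parent_edges r V p))"
    using G tree_leaves_subset_leaves by (intro card_mono) (simp_all add: leaves_def simple_graph_def)
  finally have "card V \<le> 4 * card (leaves V (parent_edges r V p)) + 1" by simp
  moreover have "spanning_tree V E (parent_edges r V p)"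
    using parent_tree_is_tree[OF G T] T by (auto simp: spanning_tree_def parent_tree_def parent_edges_def)
  ultimately show ?thesis by blast
qed

theorem mainTheorem13:
  "\<exists>c::real. c > 0 \<and>
     (\<forall>(V::nat set) E. simple_graph V E \<and> connected_graph V E \<and> card V \<ge> 2 \<and>
        (\<forall>v\<in>V. degree E v = 1 \<or> degree E v \<ge> 3) \<longrightarrow>
        (\<exists>T. spanning_tree V E T \<and> real (card (leaves V T)) \<ge> c * real (card V)))"
proof (intro exI[of _ "1/8"] conjI allI impI)
  fix V :: "nat set" and E
  assume "simple_graph V E \<and> connected_graph V E \<and> card V \<ge> 2 \<and>
    (\<forall>v\<in>V. degree E v = 1 \<or> degree E v \<ge> 3)"
  then obtain T where "spanning_tree V E T" "card V \<le> 4 * card (leaves V T) + 1" "card V \<ge> 2"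
    using spanning_tree_many_leaves by blast
  then show "\<exists>T. spanning_tree V E T \<and> real (card (leaves V T)) \<ge> 1/8 * real (card V)"
    by (intro exI[of _ T]) linarith
qed simp

end
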